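(* Let $\mathcal{W}\subseteq\{x\in\mathbb{R}^d:\|x\|_2\le1\}$ be closed convex with $0\in\mathcal{W}$, let $f_1,\dots,f_T$ be convex differentiable with $L$-Lipschitz gradients on $\mathcal{W}$, set $f_0\equiv0$, $x_0=z_0=0$, fix $\eta>0$, and for $t=1,\dots,T$ let $$x_t=\arg\min_{x\in\mathcal{W}}\Bigl\{\langle x,\nabla f_{t-1}(x_{t-1})\rangle+\tfrac{L}{2\eta}\|x-z_{t-1}\|_2^2\Bigr\},\qquad z_t=\arg\min_{x\in\mathcal{W}}\Bigl\{\langle x,\nabla f_t(x_t)\rangle+\tfrac{L}{2\eta}\|x-z_{t-1}\|_2^2\Bigr\}.$$ Let $\mathrm{EGV}_{T,2}=\sum_{t=0}^{T-1}\|\nabla f_{t+1}(x_t)-\nabla f_t(x_t)\|_2^2$. If $\eta=\frac12\min\{1/\sqrt2,\,L/\sqrt{\mathrm{EGV}_{T,2}}\}$, then $$\sum_{t=1}^T f_t(x_t)-\min_{x\in\mathcal{W}}\sum_{t=1}^T f_t(x)\le 2\max\{\sqrt2 L,\sqrt{\mathrm{EGV}_{T,2}}\}.$$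
   Context: The pair of updates is the online mirror prox (OMP) algorithm with Euclidean geometry; $x_t$ is played before $f_t$ is revealed. $\mathrm{EGV}_{T,2}$ is computed along the run of the algorithm with the given $\eta$. *)

theory Defs
  imports "HOL-Analysis.Analysis"
begin

definition is_argmin_on :: "('a \<Rightarrow> real) \<Rightarrow> 'a set \<Rightarrow> 'a \<Rightarrow> bool" where
  "is_argmin_on h W p \<longleftrightarrow> p \<in> W \<and> (\<forall>y\<in>W. h p \<le> h y)"

text \<open>Extended gradient variation EGV_{T,2} along the iterates x, with gradients g
  (g 0 is the gradient of f_0 = 0).\<close>
definition EGV :: "(nat \<Rightarrow> 'a \<Rightarrow> 'a::real_normed_vector) \<Rightarrow> (nat \<Rightarrow> 'a) \<Rightarrow> nat \<Rightarrow> real" where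
  "EGV g x T = (\<Sum>t=0..<T. (norm (g (Suc t) (x t) - g t (x t)))\<^sup>2)"

text \<open>eta = 1/2 min{1/sqrt 2, L/sqrt E}, with the convention L/sqrt 0 = +infinity.\<close>
definition omp_eta :: "real \<Rightarrow> real \<Rightarrow> real" where
  "omp_eta L E = (if E = 0 then (1/2) * (1 / sqrt 2)
                  else (1/2) * min (1 / sqrt 2) (L / sqrt E))"

end

theory Submission
  imports Defs
begin

text \<open>
  Write \<open>K = L/(2\<eta>)\<close> for the weight of the proximal term.  Each round is analysed
  from the first-order optimality conditions (variational inequalities) of the two
  proximal steps: together with the gradient inequality of convexity they bound the
  instantaneous regret \<open>f\<^sub>t(x\<^sub>t) - f\<^sub>t(u)\<close> by a drop \<open>K (\<Phi>\<^sub>t\<^sub>-\<^sub>1 - \<Phi>\<^sub>t)\<close> of the potential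
  \<open>\<Phi>\<^sub>t = \<parallel>u - z\<^sub>t\<parallel>\<^sup>2 + \<parallel>x\<^sub>t - z\<^sub>t\<parallel>\<^sup>2\<close> plus the error term \<open>\<parallel>g\<^sub>t(x\<^sub>t\<^sub>-\<^sub>1) - g\<^sub>t\<^sub>-\<^sub>1(x\<^sub>t\<^sub>-\<^sub>1)\<parallel>\<^sup>2 / K\<close>,
  provided \<open>\<surd>2 L \<le> K\<close> (the smoothness of \<open>f\<^sub>t\<close> absorbs the remaining quadratic terms).
  Telescoping gives the regret bound \<open>K \<Phi>\<^sub>0 + EGV / K\<close> for any step size with
  \<open>\<surd>2 L \<le> K\<close>.  Finally the prescribed step size yields exactly
  \<open>K = max (\<surd>2 L) (\<surd>EGV)\<close>, so that \<open>K \<Phi>\<^sub>0 + EGV / K \<le> 2K\<close> because \<open>\<Phi>\<^sub>0 \<le> 1\<close>.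
\<close>

lemma convex_on_gradient_inequality:
  fixes F :: "'a::real_inner \<Rightarrow> real"
  assumes cv: "convex_on W F" and xW: "x \<in> W" and uW: "u \<in> W"
    and deriv: "(F has_derivative (\<lambda>h. G \<bullet> h)) (at x)"
  shows "G \<bullet> (u - x) \<le> F u - F x"
proof -
  define v where "v = u - x"
  define \<phi> where "\<phi> = (\<lambda>s::real. F (x + s *\<^sub>R v))"
  have line: "((\<lambda>s::real. x + s *\<^sub>R v) has_derivative (\<lambda>h. h *\<^sub>R v)) (at 0)"
    by (auto intro!: derivative_eq_intros)
  have "((F \<circ> (\<lambda>s::real. x + s *\<^sub>R v)) has_derivative ((\<lambda>h. G \<bullet> h) \<circ> (\<lambda>h. h *\<^sub>R v))) (at 0)"
    by (rule diff_chain_at[OF line]) (simp add: deriv)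
  hence "(\<phi> has_derivative (\<lambda>h. (G \<bullet> v) * h)) (at 0)"
    by (simp add: \<phi>_def o_def mult.commute)
  hence "(\<phi> has_field_derivative (G \<bullet> v)) (at 0)"
    by (simp add: has_field_derivative_def)
  hence "((\<lambda>h. (\<phi> (0 + h) - \<phi> 0) / h) \<longlongrightarrow> G \<bullet> v) (at 0)"
    by (simp add: DERIV_def)
  hence slope_lim: "((\<lambda>h. (\<phi> (0 + h) - \<phi> 0) / h) \<longlongrightarrow> G \<bullet> v) (at_right 0)"
    by (rule tendsto_mono[rotated]) (simp add: at_le)
  \<comment> \<open>by convexity every difference quotient on \<open>(0,1)\<close> is at most \<open>F u - F x\<close>\<close>
  have "eventually (\<lambda>h. (\<phi> (0 + h) - \<phi> 0) / h \<le> F u - F x) (at_right 0)"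
    using eventually_at_right_real[OF zero_less_one]
  proof eventually_elim
    case (elim h)
    hence h: "0 < h" "h < 1" by auto
    have "x + h *\<^sub>R v = (1 - h) *\<^sub>R x + h *\<^sub>R u"
      by (simp add: v_def algebra_simps)
    hence "\<phi> h \<le> (1 - h) * F x + h * F u"
      using convex_onD[OF cv, of h x u] h xW uW by (simp add: \<phi>_def)
    hence "\<phi> h - \<phi> 0 \<le> h * (F u - F x)" by (simp add: \<phi>_def algebra_simps)
    thus ?case using h by (simp add: divide_simps mult.commute)
  qed
  from tendsto_upperbound[OF slope_lim this] show ?thesis by (simp add: v_def)
qed

lemma nonneg_at_zero_of_nonneg_right:
  fixes A B :: real
  assumes nonneg: "\<And>s. 0 < s \<Longrightarrow> s \<le> 1 \<Longrightarrow> A + s * B \<ge> 0"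
  shows "A \<ge> 0"
proof -
  have "((\<lambda>s. A + s * B) \<longlongrightarrow> A + 0 * B) (at_right 0)"
    by (intro tendsto_intros)
  moreover have "eventually (\<lambda>s. A + s * B \<ge> 0) (at_right (0::real))"
    using eventually_at_right_real[OF zero_less_one] by eventually_elim (auto intro: nonneg)
  ultimately show ?thesis by (simp add: tendsto_lowerbound)
qed

lemma prox_step_variational_inequality:
  fixes m z p u :: "'a::real_inner"
  assumes argmin: "is_argmin_on (\<lambda>y. y \<bullet> m + K * (norm (y - z))\<^sup>2) W p"
    and cW: "convex W" and uW: "u \<in> W"
  shows "(m + (2 * K) *\<^sub>R (p - z)) \<bullet> (u - p) \<ge> 0"
proof -
  have pW: "p \<in> W"
    and minimal: "\<And>y. y \<in> W \<Longrightarrow> p \<bullet> m + K * (norm (p - z))\<^sup>2 \<le> y \<bullet> m + K * (norm (y - z))\<^sup>2"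
    using argmin by (auto simp: is_argmin_on_def)
  define v where "v = u - p"
  show ?thesis unfolding v_def[symmetric]
  proof (rule nonneg_at_zero_of_nonneg_right)
    fix s :: real assume s: "0 < s" "s \<le> 1"
    have "p + s *\<^sub>R v = (1 - s) *\<^sub>R p + s *\<^sub>R u" by (simp add: v_def algebra_simps)
    also have "\<dots> \<in> W" using cW pW uW s by (intro convexD) auto
    finally have "0 \<le> (p + s *\<^sub>R v) \<bullet> m + K * (norm (p + s *\<^sub>R v - z))\<^sup>2 - (p \<bullet> m + K * (norm (p - z))\<^sup>2)"
      using minimal by simp
    also have "\<dots> = s * ((m + (2 * K) *\<^sub>R (p - z)) \<bullet> v + s * (K * (norm v)\<^sup>2))"
      unfolding power2_norm_eq_inner
      by (simp add: inner_add_left inner_add_right inner_diff_left inner_diff_right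
            inner_commute algebra_simps)
    finally show "0 \<le> (m + (2 * K) *\<^sub>R (p - z)) \<bullet> v + s * (K * (norm v)\<^sup>2)"
      using s by (simp add: zero_le_mult_iff)
  qed
qed

lemma mirror_prox_round_inequality:
  fixes q m x z z' u :: "'a::real_inner"
  assumes K: "K > 0"
    and vi_x: "(m + (2 * K) *\<^sub>R (x - z')) \<bullet> (z - x) \<ge> 0"
    and vi_z_u: "(q + (2 * K) *\<^sub>R (z - z')) \<bullet> (u - z) \<ge> 0"
    and vi_z_x: "(q + (2 * K) *\<^sub>R (z - z')) \<bullet> (x - z) \<ge> 0"
  shows "q \<bullet> (x - u) \<le> K * ((norm (u - z'))\<^sup>2 - (norm (u - z))\<^sup>2) + (norm (q - m))\<^sup>2 / (2 * K)
           - K * ((norm (x - z'))\<^sup>2 + (norm (x - z))\<^sup>2)"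
proof -
  define P where "P = (q - m) \<bullet> (x - z)"
  define N where "N = norm (q - m)"
  define b where "b = norm (x - z)"
  \<comment> \<open>the two inequalities at \<open>x\<close> and \<open>z\<close> combine to \<open>2K b\<^sup>2 \<le> P \<le> N b\<close>, hence \<open>P \<le> N\<^sup>2/(2K)\<close>\<close>
  have "P - 2 * K * b\<^sup>2 = (m + (2 * K) *\<^sub>R (x - z')) \<bullet> (z - x) + (q + (2 * K) *\<^sub>R (z - z')) \<bullet> (x - z)"
    unfolding P_def b_def power2_norm_eq_inner
    by (simp add: inner_add_left inner_add_right inner_diff_left inner_diff_right inner_commute algebra_simps)
  hence lower: "2 * K * b\<^sup>2 \<le> P" using vi_x vi_z_x by linarith
  have upper: "P \<le> N * b" unfolding P_def N_def b_def by (rule norm_cauchy_schwarz)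
  have "b \<ge> 0" "N \<ge> 0" by (auto simp: N_def b_def)
  have "P * (2 * K) \<le> N\<^sup>2"
  proof (cases "b = 0")
    case True thus ?thesis using lower upper K by (simp add: mult_nonpos_nonneg)
  next
    case False
    with \<open>b \<ge> 0\<close> have "b > 0" by simp
    have "(2 * K * b) * b = 2 * K * b\<^sup>2" by (simp add: power2_eq_square)
    with lower upper have "(2 * K * b) * b \<le> N * b" by linarith
    with \<open>b > 0\<close> have Kb: "2 * K * b \<le> N" by simp
    have "P * (2 * K) \<le> N * (2 * K * b)" using upper K by (simp add: mult_right_mono algebra_simps)
    also have "\<dots> \<le> N * N" using Kb \<open>N \<ge> 0\<close> by (simp add: mult_left_mono)
    finally show ?thesis by (simp add: power2_eq_square)
  qed
  hence P_bound: "P \<le> N\<^sup>2 / (2 * K)" using K by (simp add: field_simps)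
  have "q \<bullet> (x - u) = 2 * K * ((z - z') \<bullet> (u - z)) + 2 * K * ((x - z') \<bullet> (z - x))
      - (q + (2 * K) *\<^sub>R (z - z')) \<bullet> (u - z) - (m + (2 * K) *\<^sub>R (x - z')) \<bullet> (z - x) + P"
    unfolding P_def
    by (simp add: inner_add_left inner_add_right inner_diff_left inner_diff_right inner_commute algebra_simps)
  moreover have "2 * K * ((z - z') \<bullet> (u - z)) + 2 * K * ((x - z') \<bullet> (z - x)) =
      K * ((norm (u - z'))\<^sup>2 - (norm (u - z))\<^sup>2) - K * ((norm (x - z'))\<^sup>2 + (norm (x - z))\<^sup>2)"
    unfolding power2_norm_eq_inner
    by (simp add: inner_add_left inner_add_right inner_diff_left inner_diff_right inner_commute algebra_simps)
  ultimately show ?thesis using P_bound vi_x vi_z_u unfolding N_def by linarith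
qed

lemma prediction_error_absorption:
  fixes L a b D N K :: real
  assumes N: "0 \<le> N" "N \<le> L * (a + b) + D" and nonneg: "0 \<le> L" "0 \<le> a" "0 \<le> b" "0 \<le> D"
    and K: "K > 0" and LK: "sqrt 2 * L \<le> K"
  shows "N\<^sup>2 / (2 * K) \<le> K * (a\<^sup>2 + b\<^sup>2) + D\<^sup>2 / K"
proof -
  have two_L_sq: "2 * L\<^sup>2 \<le> K\<^sup>2"
    using power_mono[OF LK, of 2] nonneg(1) by (simp add: power_mult_distrib)
  have ab: "(a + b)\<^sup>2 \<le> 2 * (a\<^sup>2 + b\<^sup>2)"
    using sum_squares_ge_zero[of "a - b" 0] by (simp add: power2_eq_square algebra_simps)
  have "N\<^sup>2 \<le> (L * (a + b) + D)\<^sup>2" using N by (intro power_mono) auto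
  also have "\<dots> \<le> 2 * (L\<^sup>2 * (a + b)\<^sup>2) + 2 * D\<^sup>2"
    using sum_squares_ge_zero[of "L * (a + b) - D" 0] by (simp add: power2_eq_square algebra_simps)
  also have "\<dots> \<le> 2 * (L\<^sup>2 * (2 * (a\<^sup>2 + b\<^sup>2))) + 2 * D\<^sup>2"
    using ab by (simp add: mult_left_mono)
  also have "\<dots> \<le> 2 * (K\<^sup>2 * (a\<^sup>2 + b\<^sup>2)) + 2 * D\<^sup>2"
    using mult_right_mono[OF two_L_sq, of "a\<^sup>2 + b\<^sup>2"] by (simp add: algebra_simps)
  finally show ?thesis using K by (simp add: field_simps power2_eq_square)
qed

text \<open>One round of online mirror prox with proximal weight \<open>K\<close>: the extrapolation
  \<open>x\<close> uses the stale gradient \<open>m\<close>, the update \<open>z\<close> uses the fresh gradient \<open>G x\<close>,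
  both centred at \<open>z'\<close>; \<open>x'\<close> is the previous extrapolation point.\<close>
lemma mirror_prox_round_regret:
  fixes F :: "'a::euclidean_space \<Rightarrow> real" and G :: "'a \<Rightarrow> 'a"
  assumes cW: "convex W" and F_convex: "convex_on W F"
    and F_grad: "\<And>y. y \<in> W \<Longrightarrow> (F has_derivative (\<lambda>h. G y \<bullet> h)) (at y)"
    and G_lip: "\<And>y y'. y \<in> W \<Longrightarrow> y' \<in> W \<Longrightarrow> norm (G y - G y') \<le> L * norm (y - y')"
    and L: "0 \<le> L" and K: "K > 0" and LK: "sqrt 2 * L \<le> K"
    and x'W: "x' \<in> W" and uW: "u \<in> W"
    and x_step: "is_argmin_on (\<lambda>y. y \<bullet> m + K * (norm (y - z'))\<^sup>2) W x"
    and z_step: "is_argmin_on (\<lambda>y. y \<bullet> G x + K * (norm (y - z'))\<^sup>2) W z"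
  shows "F x - F u \<le> K * (((norm (u - z'))\<^sup>2 + (norm (x' - z'))\<^sup>2) - ((norm (u - z))\<^sup>2 + (norm (x - z))\<^sup>2))
           + (norm (G x' - m))\<^sup>2 / K"
proof -
  have xW: "x \<in> W" and zW: "z \<in> W" using x_step z_step by (auto simp: is_argmin_on_def)
  have "F x - F u \<le> G x \<bullet> (x - u)"
    using convex_on_gradient_inequality[OF F_convex xW uW F_grad[OF xW]] by (simp add: inner_diff_right)
  also have "\<dots> \<le> K * ((norm (u - z'))\<^sup>2 - (norm (u - z))\<^sup>2) + (norm (G x - m))\<^sup>2 / (2 * K)
      - K * ((norm (x - z'))\<^sup>2 + (norm (x - z))\<^sup>2)"
    by (rule mirror_prox_round_inequality[OF K
          prox_step_variational_inequality[OF x_step cW zW]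
          prox_step_variational_inequality[OF z_step cW uW]
          prox_step_variational_inequality[OF z_step cW xW]])
  finally have linearised: "F x - F u \<le> \<dots>" .
  have "norm (G x - m) \<le> norm (G x - G x') + norm (G x' - m)"
    using norm_triangle_ineq[of "G x - G x'" "G x' - m"] by simp
  also have "norm (G x - G x') \<le> L * norm (x - x')" by (rule G_lip[OF xW x'W])
  also have "\<dots> \<le> L * (norm (x - z') + norm (x' - z'))"
    using norm_triangle_ineq[of "x - z'" "z' - x'"] L by (intro mult_left_mono) (auto simp: norm_minus_commute)
  finally have "norm (G x - m) \<le> L * (norm (x - z') + norm (x' - z')) + norm (G x' - m)" by simp
  hence "(norm (G x - m))\<^sup>2 / (2 * K) \<le> K * ((norm (x - z'))\<^sup>2 + (norm (x' - z'))\<^sup>2) + (norm (G x' - m))\<^sup>2 / K"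
    by (rule prediction_error_absorption[rotated]) (use L K LK in auto)
  with linearised show ?thesis by (simp add: algebra_simps)
qed

lemma telescoping_bound:
  fixes a b \<Phi> :: "nat \<Rightarrow> real"
  assumes "\<And>t. t \<in> {1..n} \<Longrightarrow> a t \<le> K * (\<Phi> (t - 1) - \<Phi> t) + b t"
  shows "(\<Sum>t=1..n. a t) \<le> K * (\<Phi> 0 - \<Phi> n) + (\<Sum>t=1..n. b t)"
proof -
  have "(\<Sum>t=1..n. a t) \<le> (\<Sum>t=1..n. K * (\<Phi> (t - 1) - \<Phi> t) + b t)"
    using assms by (rule sum_mono)
  also have "\<dots> = K * - (\<Sum>t=Suc 0..n. \<Phi> t - \<Phi> (t - 1)) + (\<Sum>t=1..n. b t)"
    by (simp add: sum.distrib sum_distrib_left sum_negf[symmetric])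
  also have "\<dots> = K * (\<Phi> 0 - \<Phi> n) + (\<Sum>t=1..n. b t)"
    using sum_telescope''[of 0 n \<Phi>] by simp
  finally show ?thesis .
qed

text \<open>The initial gradient \<open>g 0\<close> is arbitrary here; it is
  the guess \<open>m\<close> of the first round and enters through the first term of \<open>EGV\<close>.\<close>
lemma mirror_prox_regret:
  fixes W :: "'a::euclidean_space set" and f :: "nat \<Rightarrow> 'a \<Rightarrow> real"
    and g :: "nat \<Rightarrow> 'a \<Rightarrow> 'a" and x z :: "nat \<Rightarrow> 'a"
  assumes cW: "convex W" and x0W: "x 0 \<in> W" and uW: "u \<in> W"
    and L: "0 \<le> L" and K: "K > 0" and LK: "sqrt 2 * L \<le> K"
    and f_convex: "\<And>t. t \<in> {1..T} \<Longrightarrow> convex_on W (f t)"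
    and f_grad: "\<And>t y. t \<in> {1..T} \<Longrightarrow> y \<in> W \<Longrightarrow> (f t has_derivative (\<lambda>h. g t y \<bullet> h)) (at y)"
    and g_lip: "\<And>t y y'. t \<in> {1..T} \<Longrightarrow> y \<in> W \<Longrightarrow> y' \<in> W \<Longrightarrow>
                   norm (g t y - g t y') \<le> L * norm (y - y')"
    and x_step: "\<And>t. t \<in> {1..T} \<Longrightarrow>
       is_argmin_on (\<lambda>y. y \<bullet> g (t - 1) (x (t - 1)) + K * (norm (y - z (t - 1)))\<^sup>2) W (x t)"
    and z_step: "\<And>t. t \<in> {1..T} \<Longrightarrow>
       is_argmin_on (\<lambda>y. y \<bullet> g t (x t) + K * (norm (y - z (t - 1)))\<^sup>2) W (z t)"
  shows "(\<Sum>t=1..T. f t (x t) - f t u) \<le> K * ((norm (u - z 0))\<^sup>2 + (norm (x 0 - z 0))\<^sup>2) + EGV g x T / K"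
proof -
  define \<Phi> where "\<Phi> = (\<lambda>s. (norm (u - z s))\<^sup>2 + (norm (x s - z s))\<^sup>2)"
  define err where "err = (\<lambda>s. (norm (g (Suc s) (x s) - g s (x s)))\<^sup>2 / K)"
  have xW: "x t \<in> W" if "t \<le> T" for t
    using x0W x_step[of t] that by (cases "t = 0") (auto simp: is_argmin_on_def)
  have "(\<Sum>t=1..T. f t (x t) - f t u) \<le> K * (\<Phi> 0 - \<Phi> T) + (\<Sum>t=1..T. err (t - 1))"
  proof (rule telescoping_bound)
    fix t assume t: "t \<in> {1..T}"
    hence "Suc (t - 1) = t" "t - 1 \<le> T" by auto
    with mirror_prox_round_regret[OF cW f_convex[OF t] f_grad[OF t] g_lip[OF t] L K LK
        xW[of "t - 1"] uW x_step[OF t] z_step[OF t]]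
    show "f t (x t) - f t u \<le> K * (\<Phi> (t - 1) - \<Phi> t) + err (t - 1)"
      by (simp add: \<Phi>_def err_def)
  qed
  also have "(\<Sum>t=1..T. err (t - 1)) = EGV g x T / K"
    using sum.atLeast1_atMost_eq[of "\<lambda>t. err (t - 1)" T]
    by (simp add: EGV_def err_def sum_divide_distrib atLeast0LessThan)
  also have "K * (\<Phi> 0 - \<Phi> T) \<le> K * \<Phi> 0" using K by (simp add: \<Phi>_def)
  finally show ?thesis by (simp add: \<Phi>_def)
qed

lemma omp_eta_proximal_weight:
  fixes L E :: real
  assumes L: "L > 0" and E: "E \<ge> 0"
  shows "L / (2 * omp_eta L E) = max (sqrt 2 * L) (sqrt E)"
proof (cases "E = 0")
  case True
  have "sqrt 2 * L > 0" using L by simp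
  with True show ?thesis by (simp add: omp_eta_def max_def)
next
  case False
  with E have sE: "sqrt E > 0" by simp
  have "1 / sqrt 2 \<le> L / sqrt E \<longleftrightarrow> sqrt E \<le> sqrt 2 * L"
    using sE by (simp add: field_simps)
  thus ?thesis using False L sE by (auto simp: omp_eta_def min_def max_def field_simps)
qed

lemma potential_plus_variation_bound:
  fixes K E \<Phi> :: real
  assumes K: "K > 0" and E: "sqrt E \<le> K" "E \<ge> 0" and \<Phi>: "\<Phi> \<le> 1"
  shows "K * \<Phi> + E / K \<le> 2 * K"
proof -
  have "E \<le> K\<^sup>2" using power_mono[OF E(1), of 2] E(2) by simp
  hence "E / K \<le> K" using K by (simp add: field_simps power2_eq_square)
  moreover have "K * \<Phi> \<le> K" using K \<Phi> by simp
  ultimately show ?thesis by simp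
qed

theorem mainTheorem4:
  fixes W :: "'a::euclidean_space set"
    and f :: "nat \<Rightarrow> 'a \<Rightarrow> real"
    and g :: "nat \<Rightarrow> 'a \<Rightarrow> 'a"
    and x z :: "nat \<Rightarrow> 'a"
    and L \<eta> :: real and T :: nat
  assumes W_closed: "closed W" and W_convex: "convex W"
    and W_ball: "W \<subseteq> cball 0 1" and W_zero: "0 \<in> W"
    and L_pos: "L > 0"
    and f_convex: "\<And>t. t \<in> {1..T} \<Longrightarrow> convex_on W (f t)"
    and f_grad: "\<And>t y. t \<in> {1..T} \<Longrightarrow> y \<in> W \<Longrightarrow>
                   (f t has_derivative (\<lambda>h. g t y \<bullet> h)) (at y)"
    and g_lip: "\<And>t y y'. t \<in> {1..T} \<Longrightarrow> y \<in> W \<Longrightarrow> y' \<in> W \<Longrightarrow>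
                   norm (g t y - g t y') \<le> L * norm (y - y')"
    and f0: "f 0 = (\<lambda>_. 0)" and g0: "g 0 = (\<lambda>_. 0)"
    and x0: "x 0 = 0" and z0: "z 0 = 0"
    and eta_pos: "\<eta> > 0"
    and x_step: "\<And>t. t \<in> {1..T} \<Longrightarrow>
       is_argmin_on (\<lambda>y. y \<bullet> g (t - 1) (x (t - 1)) + L / (2 * \<eta>) * (norm (y - z (t - 1)))\<^sup>2) W (x t)"
    and z_step: "\<And>t. t \<in> {1..T} \<Longrightarrow>
       is_argmin_on (\<lambda>y. y \<bullet> g t (x t) + L / (2 * \<eta>) * (norm (y - z (t - 1)))\<^sup>2) W (z t)"
    and eta_choice: "\<eta> = omp_eta L (EGV g x T)"
  shows "(\<Sum>t=1..T. f t (x t)) - (INF u\<in>W. \<Sum>t=1..T. f t u)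
           \<le> 2 * max (sqrt 2 * L) (sqrt (EGV g x T))"
proof -
  define E where "E = EGV g x T"
  have E: "E \<ge> 0" by (simp add: E_def EGV_def sum_nonneg)
  define K where "K = L / (2 * \<eta>)"
  have K_eq: "K = max (sqrt 2 * L) (sqrt E)"
    using omp_eta_proximal_weight[OF L_pos E] by (simp add: K_def E_def eta_choice)
  have K_pos: "K > 0" using L_pos eta_pos by (simp add: K_def)
  have "(\<Sum>t=1..T. f t (x t)) - 2 * K \<le> (\<Sum>t=1..T. f t u)" if uW: "u \<in> W" for u
  proof -
    have "(\<Sum>t=1..T. f t (x t) - f t u) \<le> K * ((norm (u - z 0))\<^sup>2 + (norm (x 0 - z 0))\<^sup>2) + E / K"
      unfolding K_def E_def
      by (rule mirror_prox_regret[where K = "L / (2 * \<eta>)" and x = x and z = z and g = g,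
            OF W_convex _ uW _ _ _ f_convex f_grad g_lip x_step z_step])
        (use x0 W_zero L_pos K_pos K_eq in \<open>auto simp: K_def\<close>)
    also have "\<dots> \<le> 2 * K"
      using uW W_ball K_pos E K_eq by (intro potential_plus_variation_bound) (auto simp: x0 z0 power_le_one)
    finally show ?thesis by (simp add: sum_subtractf)
  qed
  hence "(\<Sum>t=1..T. f t (x t)) - 2 * K \<le> (INF u\<in>W. \<Sum>t=1..T. f t u)"
    using W_zero by (intro cINF_greatest) auto
  thus ?thesis by (simp add: K_eq E_def)
qed

end
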